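(* Fix a mobile user $k$, a frame length $T\in\mathbb{N}$, $T\ge 1$, a threshold $\varepsilon\in[0,1]$ and a request probability $\lambda_k\in[0,1]$. For every frame index $q\in\{0,1,2,\ldots\}$, with $\mathcal{T}_q=\{qT,qT+1,\ldots,(q+1)T-1\}$ and $$\Delta\mathcal{L}_k[qT]=\mathbb{E}\left\{\tfrac12 (Y_k[qT+T])^2-\tfrac12 (Y_k[qT])^2 \,\Big|\, Y_k[qT]\right\},$$ we have $$\Delta \mathcal{L}_k[qT]\leq B_{k,2}T+\mathbb{E}\left\{Y_k[qT]\sum_{n\in\mathcal{T}_q}\left(X_k[n]-\varepsilon \right)\,\Big|\, Y_k[qT] \right\},$$ where $B_{k,2}\triangleq \tfrac12(\lambda_k+\varepsilon^2)+\tfrac12(T-1)\left[(1-\varepsilon)\lambda_k+\varepsilon^2\right]$.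
   Context: Time is slotted, $n=0,1,2,\ldots$. In each slot $n$, mobile user $k$ issues a digital-twin synchronization request indicated by $a_k[n]\in\{0,1\}$; the $a_k[n]$ are i.i.d. over slots with $\Pr(a_k[n]=1)=\lambda_k$, and $a_k[n]$ is independent of everything that happened before slot $n$ (in particular, for $n\ge qT$, $a_k[n]$ is independent of $Y_k[qT]$). The synchronization failure indicator $X_k[n]\in\{0,1\}$ equals $1$ only if a request is made and it fails (the twin is migrating during slot $n$, or the synchronization delay exceeds its deadline), so in particular $X_k[n]\le a_k[n]$. The virtual queue is defined by $Y_k[0]=0$ and $Y_k[n+1]=\max\{Y_k[n]+X_k[n]-\varepsilon,\,0\}$. *)

theory Defs
  imports "HOL-Probability.Probability"
begin

fun vqueue :: "real \<Rightarrow> (nat \<Rightarrow> 'a \<Rightarrow> real) \<Rightarrow> nat \<Rightarrow> 'a \<Rightarrow> real" where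
  "vqueue eps X 0 \<omega> = 0"
| "vqueue eps X (Suc n) \<omega> = max (vqueue eps X n \<omega> + X n \<omega> - eps) 0"

definition Bk2 :: "real \<Rightarrow> real \<Rightarrow> nat \<Rightarrow> real" where
  "Bk2 lam eps T = (1/2) * (lam + eps^2) + (1/2) * (real T - 1) * ((1 - eps) * lam + eps^2)"

end

theory Submission
  imports Defs
begin

(* Expanding the square in the queue recursion gives the one-slot bound
   Y[n+1]^2/2 - Y[n]^2/2 <= Y[n] (X[n] - eps) + (X[n] - eps)^2/2.
   Within a frame, Y[qT+i] lies between Y[qT] - i eps and Y[qT] + i (1 - eps), so replacing
   Y[qT+i] by Y[qT] in the cross term costs at most i (eps^2 + (1 - eps) a[qT+i]); and since
   X <= a are binary, (X - eps)^2/2 <= (a + eps^2)/2.  This bounds the frame drift pathwise by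
   Y[qT] * sum (X[n] - eps) plus an affine function of the requests a[qT+i].  Each a[qT+i] is
   independent of F(qT+i), which contains sigma(Y[qT]), so its conditional expectation is lam,
   and the resulting constants sum to B_{k,2} T. *)

lemma vqueue_nonneg: "0 \<le> vqueue eps X n \<omega>"
  by (cases n) auto

lemma vqueue_add_ge:
  assumes "\<And>n. 0 \<le> X n \<omega>"
  shows "vqueue eps X s \<omega> - real j * eps \<le> vqueue eps X (s + j) \<omega>"
proof (induction j)
  case (Suc j)
  then show ?case
    using assms[of "s + j"] by (simp add: algebra_simps max_def)
qed simp

lemma vqueue_add_le:
  assumes "\<And>n. X n \<omega> \<le> 1" and "eps \<le> 1"
  shows "vqueue eps X (s + j) \<omega> \<le> vqueue eps X s \<omega> + real j * (1 - eps)"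
proof (induction j)
  case (Suc j)
  then show ?case
    using assms(1)[of "s + j"] assms(2) vqueue_nonneg[of eps X s \<omega>]
      mult_nonneg_nonneg[of "real (Suc j)" "1 - eps"]
    by (simp add: algebra_simps max_def)
qed simp

lemma vqueue_square_drift_Suc:
  "(vqueue eps X (Suc n) \<omega>)\<^sup>2 / 2 - (vqueue eps X n \<omega>)\<^sup>2 / 2
     \<le> vqueue eps X n \<omega> * (X n \<omega> - eps) + (X n \<omega> - eps)\<^sup>2 / 2"
proof -
  have "(max (vqueue eps X n \<omega> + X n \<omega> - eps) 0)\<^sup>2 \<le> (vqueue eps X n \<omega> + X n \<omega> - eps)\<^sup>2"
    by (simp add: max_def)
  then show ?thesis
    by (simp add: power2_eq_square field_simps)
qed

lemma binary_slot_drift_le: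
  fixes x b y y\<^sub>0 eps k :: real
  assumes x: "x \<in> {0, 1}" and "x \<le> b" and "0 \<le> eps" and "eps \<le> 1"
    and lower: "y\<^sub>0 - k * eps \<le> y" and upper: "y \<le> y\<^sub>0 + k * (1 - eps)"
  shows "y * (x - eps) + (x - eps)\<^sup>2 / 2
           \<le> y\<^sub>0 * (x - eps) + eps\<^sup>2 / 2 + k * eps\<^sup>2 + (1 / 2 + k * (1 - eps)) * b"
proof -
  have "0 \<le> k"
    using lower upper by (simp add: algebra_simps)
  from x consider "x = 0" | "x = 1" by blast
  then show ?thesis
  proof cases
    case 1
    have "(y\<^sub>0 - y) * eps \<le> (k * eps) * eps"
      using lower \<open>0 \<le> eps\<close> by (intro mult_right_mono) auto
    moreover have "0 \<le> (1 / 2 + k * (1 - eps)) * b"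
      using \<open>0 \<le> k\<close> \<open>x \<le> b\<close> \<open>eps \<le> 1\<close> 1 by simp
    ultimately show ?thesis
      using 1 by (simp add: power2_eq_square algebra_simps)
  next
    case 2
    have "(y - y\<^sub>0) * (1 - eps) \<le> (k * (1 - eps)) * (1 - eps)"
      using upper \<open>eps \<le> 1\<close> by (intro mult_right_mono) auto
    moreover have "(1 - eps) * (1 - eps) \<le> eps * eps + (1 - eps) * b"
      using mult_left_mono[of "1 - eps" b "1 - eps"] 2 \<open>x \<le> b\<close> \<open>0 \<le> eps\<close> \<open>eps \<le> 1\<close>
      by (simp add: add_increasing)
    then have "k * ((1 - eps) * (1 - eps)) \<le> k * (eps * eps + (1 - eps) * b)"
      using \<open>0 \<le> k\<close> by (rule mult_left_mono)
    ultimately have "y * (1 - eps) \<le> y\<^sub>0 * (1 - eps) + k * eps\<^sup>2 + k * (1 - eps) * b"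
      by (simp add: power2_eq_square algebra_simps)
    moreover have "(1 - eps)\<^sup>2 / 2 \<le> eps\<^sup>2 / 2 + b / 2"
      using 2 \<open>x \<le> b\<close> \<open>0 \<le> eps\<close> by (simp add: power2_eq_square algebra_simps)
    ultimately show ?thesis
      using 2 by (simp add: algebra_simps)
  qed
qed

lemma vqueue_square_drift_add:
  assumes X01: "\<And>n. X n \<omega> \<in> {0, 1}" and X_le: "\<And>n. X n \<omega> \<le> a n \<omega>"
    and "0 \<le> eps" and "eps \<le> 1"
  shows "(vqueue eps X (s + j) \<omega>)\<^sup>2 / 2 - (vqueue eps X s \<omega>)\<^sup>2 / 2
           \<le> vqueue eps X s \<omega> * (\<Sum>n\<in>{s..<s + j}. X n \<omega> - eps)
             + (\<Sum>i<j. eps\<^sup>2 / 2 + real i * eps\<^sup>2 + (1 / 2 + real i * (1 - eps)) * a (s + i) \<omega>)"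
proof -
  have X_bounds: "0 \<le> X n \<omega>" "X n \<omega> \<le> 1" for n
    using X01[of n] by auto
  show ?thesis
  proof (induction j)
    case (Suc j)
    have "(vqueue eps X (s + Suc j) \<omega>)\<^sup>2 / 2 - (vqueue eps X (s + j) \<omega>)\<^sup>2 / 2
            \<le> vqueue eps X (s + j) \<omega> * (X (s + j) \<omega> - eps) + (X (s + j) \<omega> - eps)\<^sup>2 / 2"
      using vqueue_square_drift_Suc[of eps X "s + j" \<omega>] by simp
    also have "\<dots> \<le> vqueue eps X s \<omega> * (X (s + j) \<omega> - eps)
                     + eps\<^sup>2 / 2 + real j * eps\<^sup>2 + (1 / 2 + real j * (1 - eps)) * a (s + j) \<omega>"
    proof (rule binary_slot_drift_le)
      show "vqueue eps X s \<omega> - real j * eps \<le> vqueue eps X (s + j) \<omega>"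
        by (rule vqueue_add_ge) (rule X_bounds(1))
      show "vqueue eps X (s + j) \<omega> \<le> vqueue eps X s \<omega> + real j * (1 - eps)"
        by (rule vqueue_add_le) (rule X_bounds(2), rule \<open>eps \<le> 1\<close>)
    qed (use X01 X_le \<open>0 \<le> eps\<close> \<open>eps \<le> 1\<close> in auto)
    finally show ?case
      using Suc.IH by (simp add: algebra_simps)
  qed simp
qed

lemma Bk2_frame_sum:
  "(\<Sum>i<T. eps\<^sup>2 / 2 + real i * eps\<^sup>2 + (1 / 2 + real i * (1 - eps)) * lam) = Bk2 lam eps T * real T"
proof (induction T)
  case (Suc T)
  then show ?case
    by (simp add: Bk2_def) (simp add: field_simps power2_eq_square)
qed (simp add: Bk2_def)

lemma filtration_SucI:
  fixes F :: "nat \<Rightarrow> 'a measure"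
  assumes "\<And>n. subalgebra M (F n)" and "\<And>n. sets (F n) \<subseteq> sets (F (Suc n))"
  shows "filtration (space M) F"
proof
  show "space (F n) = space M" for n
    using assms(1) by (simp add: subalgebra_def)
  show "sets (F m) \<subseteq> sets (F n)" if "m \<le> n" for m n
    using lift_Suc_mono_le[of "\<lambda>n. sets (F n)", OF assms(2) that] .
qed

lemma (in filtration) measurable_F_mono:
  assumes "i \<le> j" and "f \<in> measurable (F i) N"
  shows "f \<in> measurable (F j) N"
  using assms by (intro measurable_from_subalg[of "F j" "F i"]) (auto simp: subalgebra_def space_F sets_F_mono)

lemma vqueue_adapted:
  fixes F :: "nat \<Rightarrow> 'a measure"
  assumes "filtration \<Omega> F" and "\<And>n. X n \<in> borel_measurable (F (Suc n))"
  shows "vqueue eps X n \<in> borel_measurable (F n)"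
proof (induction n)
  case (Suc n)
  have [measurable]: "vqueue eps X n \<in> borel_measurable (F (Suc n))" "X n \<in> borel_measurable (F (Suc n))"
    using filtration.measurable_F_mono[OF assms(1) _ Suc] assms(2) by auto
  show ?case
    by simp
qed simp

lemma (in finite_measure) integrable_binary:
  fixes b :: "'a \<Rightarrow> real"
  assumes "b \<in> borel_measurable M" and "\<And>\<omega>. \<omega> \<in> space M \<Longrightarrow> b \<omega> \<in> {0, 1}"
  shows "integrable M b"
proof (rule integrable_const_bound[where B = 1])
  show "AE \<omega> in M. norm (b \<omega>) \<le> 1"
    using assms(2) by (intro AE_I2) fastforce
qed (fact assms(1))

lemma (in finite_measure) integrable_vqueue_frame_terms:
  assumes [measurable]: "\<And>n. X n \<in> borel_measurable M"
    and X01: "\<And>n \<omega>. \<omega> \<in> space M \<Longrightarrow> X n \<omega> \<in> {0, 1}" and "0 \<le> eps" and "eps \<le> 1"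
  shows "integrable M (\<lambda>\<omega>. (vqueue eps X (s + j) \<omega>)\<^sup>2 / 2 - (vqueue eps X s \<omega>)\<^sup>2 / 2)"
    and "integrable M (\<lambda>\<omega>. vqueue eps X s \<omega> * (\<Sum>n\<in>I. X n \<omega> - eps))"
proof -
  have "filtration (space M) (\<lambda>_::nat. M)"
    by unfold_locales auto
  then have [measurable]: "vqueue eps X n \<in> borel_measurable M" for n
    by (rule vqueue_adapted) simp
  have vqueue_le: "vqueue eps X n \<omega> \<le> real n" if "\<omega> \<in> space M" for n \<omega>
  proof -
    have "X m \<omega> \<le> 1" for m
      using X01[OF that, of m] by auto
    then have "vqueue eps X (0 + n) \<omega> \<le> vqueue eps X 0 \<omega> + real n * (1 - eps)"
      using \<open>eps \<le> 1\<close> by (rule vqueue_add_le)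
    then show ?thesis
      using mult_nonneg_nonneg[OF \<open>0 \<le> eps\<close> of_nat_0_le_iff[of n]] by (simp add: algebra_simps)
  qed
  have vqueue_sq_le: "(vqueue eps X n \<omega>)\<^sup>2 \<le> (real n)\<^sup>2" if "\<omega> \<in> space M" for n \<omega>
    using vqueue_le[OF that] vqueue_nonneg by (intro power_mono) auto
  show "integrable M (\<lambda>\<omega>. (vqueue eps X (s + j) \<omega>)\<^sup>2 / 2 - (vqueue eps X s \<omega>)\<^sup>2 / 2)"
  proof (intro integrable_const_bound[where B = "(real (s + j))\<^sup>2 + (real s)\<^sup>2"] AE_I2)
    fix \<omega> assume "\<omega> \<in> space M"
    then show "norm ((vqueue eps X (s + j) \<omega>)\<^sup>2 / 2 - (vqueue eps X s \<omega>)\<^sup>2 / 2)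
                 \<le> (real (s + j))\<^sup>2 + (real s)\<^sup>2"
      using vqueue_sq_le[of \<omega> "s + j"] vqueue_sq_le[of \<omega> s]
        zero_le_power2[of "vqueue eps X (s + j) \<omega>"] zero_le_power2[of "vqueue eps X s \<omega>"]
        zero_le_power2[of "real (s + j)"] zero_le_power2[of "real s"]
      unfolding real_norm_def abs_le_iff by linarith
  qed simp
  show "integrable M (\<lambda>\<omega>. vqueue eps X s \<omega> * (\<Sum>n\<in>I. X n \<omega> - eps))"
  proof (intro integrable_const_bound[where B = "real s * real (card I)"] AE_I2)
    fix \<omega> assume \<omega>: "\<omega> \<in> space M"
    have "\<bar>\<Sum>n\<in>I. X n \<omega> - eps\<bar> \<le> (\<Sum>n\<in>I. \<bar>X n \<omega> - eps\<bar>)"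
      by (rule sum_abs)
    also have "\<dots> \<le> real (card I) * 1"
    proof (rule sum_bounded_above)
      fix n
      show "\<bar>X n \<omega> - eps\<bar> \<le> 1"
        using X01[OF \<omega>, of n] \<open>0 \<le> eps\<close> \<open>eps \<le> 1\<close> by auto
    qed
    finally show "norm (vqueue eps X s \<omega> * (\<Sum>n\<in>I. X n \<omega> - eps)) \<le> real s * real (card I)"
      using vqueue_le[OF \<omega>, of s] vqueue_nonneg[of eps X s \<omega>]
      by (simp add: abs_mult mult_mono)
  qed simp
qed

lemma (in prob_space) real_cond_exp_indep_binary:
  assumes "subalgebra M G" and [measurable]: "b \<in> borel_measurable M"
    and b01: "\<And>\<omega>. \<omega> \<in> space M \<Longrightarrow> b \<omega> \<in> {0, 1}"
    and "sets G \<subseteq> H" and indep: "indep_set H {b -` A \<inter> space M | A. A \<in> sets borel}"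
  shows "AE \<omega> in M. real_cond_exp M G b \<omega> = prob {\<omega> \<in> space M. b \<omega> = 1}"
proof -
  interpret G: finite_measure_subalgebra M G
    by unfold_locales (rule assms(1))
  let ?E = "{\<omega> \<in> space M. b \<omega> = 1}"
  show ?thesis
  proof (rule G.real_cond_exp_charact)
    fix A assume "A \<in> sets G"
    then have [measurable]: "A \<in> sets M"
      using assms(1) by (auto simp: subalgebra_def)
    have "?E \<in> {b -` A \<inter> space M | A. A \<in> sets borel}"
      by (intro CollectI exI[of _ "{1}"]) auto
    then have "prob (A \<inter> ?E) = prob A * prob ?E"
      using \<open>A \<in> sets G\<close> \<open>sets G \<subseteq> H\<close> by (intro indep_setD[OF indep]) auto
    moreover have "(\<integral>\<omega>\<in>A. b \<omega> \<partial>M) = (\<integral>\<omega>. indicator (A \<inter> ?E) \<omega> \<partial>M)"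
      unfolding set_lebesgue_integral_def
      by (rule Bochner_Integration.integral_cong) (auto dest: b01 simp: indicator_def)
    ultimately show "(\<integral>\<omega>\<in>A. b \<omega> \<partial>M) = (\<integral>\<omega>\<in>A. prob ?E \<partial>M)"
      by (simp add: set_lebesgue_integral_def)
  qed (use integrable_binary[OF assms(2) b01] in auto)
qed

lemma (in prob_space) real_cond_exp_le_affine_bound:
  fixes b :: "'i \<Rightarrow> 'a \<Rightarrow> real"
  assumes "subalgebra M G" and "finite I"
    and [simp]: "integrable M f" "integrable M g" "\<And>i. integrable M (b i)"
    and bound: "AE \<omega> in M. f \<omega> \<le> g \<omega> + (\<Sum>i\<in>I. c i + d i * b i \<omega>)"
    and cond_b: "\<And>i. i \<in> I \<Longrightarrow> AE \<omega> in M. real_cond_exp M G (b i) \<omega> = \<beta> i"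
  shows "AE \<omega> in M. real_cond_exp M G f \<omega> \<le> (\<Sum>i\<in>I. c i + d i * \<beta> i) + real_cond_exp M G g \<omega>"
proof -
  interpret G: finite_measure_subalgebra M G
    by unfold_locales (rule assms(1))
  let ?h = "\<lambda>i \<omega>. c i + d i * b i \<omega>"
  have h_integrable: "integrable M (?h i)" for i
    by simp
  have cond_h: "AE \<omega> in M. real_cond_exp M G (?h i) \<omega> = c i + d i * \<beta> i" if "i \<in> I" for i
  proof -
    have "AE \<omega> in M. real_cond_exp M G (?h i) \<omega>
                      = real_cond_exp M G (\<lambda>_. c i) \<omega> + real_cond_exp M G (\<lambda>\<omega>. d i * b i \<omega>) \<omega>"
      by (rule G.real_cond_exp_add) auto
    moreover have "AE \<omega> in M. real_cond_exp M G (\<lambda>_. c i) \<omega> = c i"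
      by (rule G.real_cond_exp_F_meas) auto
    moreover have "AE \<omega> in M. real_cond_exp M G (\<lambda>\<omega>. d i * b i \<omega>) \<omega> = d i * real_cond_exp M G (b i) \<omega>"
      by (rule G.real_cond_exp_cmult) simp
    ultimately show ?thesis
      using cond_b[OF that] by eventually_elim simp
  qed
  have "AE \<omega> in M. real_cond_exp M G f \<omega> \<le> real_cond_exp M G (\<lambda>\<omega>. g \<omega> + (\<Sum>i\<in>I. ?h i \<omega>)) \<omega>"
    using bound by (rule G.real_cond_exp_mono) auto
  moreover have "AE \<omega> in M. real_cond_exp M G (\<lambda>\<omega>. g \<omega> + (\<Sum>i\<in>I. ?h i \<omega>)) \<omega>
                   = real_cond_exp M G g \<omega> + real_cond_exp M G (\<lambda>\<omega>. \<Sum>i\<in>I. ?h i \<omega>) \<omega>"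
    by (rule G.real_cond_exp_add) auto
  moreover have "AE \<omega> in M. real_cond_exp M G (\<lambda>\<omega>. \<Sum>i\<in>I. ?h i \<omega>) \<omega> = (\<Sum>i\<in>I. real_cond_exp M G (?h i) \<omega>)"
    by (rule G.real_cond_exp_sum) (rule h_integrable)
  moreover have "AE \<omega> in M. \<forall>i\<in>I. real_cond_exp M G (?h i) \<omega> = c i + d i * \<beta> i"
    using \<open>finite I\<close> cond_h by (rule AE_finite_allI)
  ultimately show ?thesis
    by eventually_elim (simp add: add.commute)
qed

theorem lemma2:
  fixes M :: "'a measure" and F :: "nat \<Rightarrow> 'a measure"
    and a X :: "nat \<Rightarrow> 'a \<Rightarrow> real"
    and lam eps :: real and T :: nat
  assumes "prob_space M"
    and "T \<ge> 1" and "0 \<le> eps" and "eps \<le> 1" and "0 \<le> lam" and "lam \<le> 1"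
    \<comment> \<open>F n = information generated before slot n (a filtration of sub-sigma-algebras)\<close>
    and "\<And>n. subalgebra M (F n)"
    and "\<And>n. sets (F n) \<subseteq> sets (F (Suc n))"
    \<comment> \<open>requests are Bernoulli(lam), known by the end of slot n, independent of the past\<close>
    and "\<And>n. a n \<in> borel_measurable (F (Suc n))"
    and "\<And>n \<omega>. \<omega> \<in> space M \<Longrightarrow> a n \<omega> \<in> {0, 1}"
    and "\<And>n. prob_space.prob M {\<omega> \<in> space M. a n \<omega> = 1} = lam"
    and "\<And>n. prob_space.indep_set M (sets (F n))
                {a n -` A \<inter> space M | A. A \<in> sets borel}"
    \<comment> \<open>failure indicators: binary, determined by the end of slot n, X \<le> a\<close>
    and "\<And>n. X n \<in> borel_measurable (F (Suc n))"
    and "\<And>n \<omega>. \<omega> \<in> space M \<Longrightarrow> X n \<omega> \<in> {0, 1}"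
    and "\<And>n \<omega>. \<omega> \<in> space M \<Longrightarrow> X n \<omega> \<le> a n \<omega>"
  shows "AE \<omega> in M.
           real_cond_exp M (vimage_algebra (space M) (vqueue eps X (q * T)) borel)
             (\<lambda>\<omega>. (1/2) * (vqueue eps X (q * T + T) \<omega>)^2 - (1/2) * (vqueue eps X (q * T) \<omega>)^2) \<omega>
         \<le> Bk2 lam eps T * real T
           + real_cond_exp M (vimage_algebra (space M) (vqueue eps X (q * T)) borel)
             (\<lambda>\<omega>. vqueue eps X (q * T) \<omega> * (\<Sum>n\<in>{q * T ..< (q + 1) * T}. X n \<omega> - eps)) \<omega>"
proof -
  interpret prob_space M by fact
  define s where "s = q * T"
  define G where "G = vimage_algebra (space M) (vqueue eps X s) borel"
  have F: "filtration (space M) F"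
    using assms(7,8) by (rule filtration_SucI)
  have a_M: "a n \<in> borel_measurable M" and X_M: "X n \<in> borel_measurable M" for n
    using measurable_from_subalg[OF assms(7)] assms(9,13) by blast+
  have G_F: "sets G \<subseteq> sets (F (s + i))" for i
    unfolding G_def using filtration.space_F[OF F]
    by (intro sets_image_in_sets filtration.measurable_F_mono[OF F _ vqueue_adapted[OF F assms(13)]]) simp_all
  have G: "subalgebra M G"
    using G_F[of 0] assms(7) by (auto simp: subalgebra_def G_def)
  have cond_a: "AE \<omega> in M. real_cond_exp M G (a (s + i)) \<omega> = lam" for i
    using real_cond_exp_indep_binary[OF G a_M assms(10) G_F assms(12)] assms(11) by simp
  have path: "AE \<omega> in M. (vqueue eps X (s + T) \<omega>)\<^sup>2 / 2 - (vqueue eps X s \<omega>)\<^sup>2 / 2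
      \<le> vqueue eps X s \<omega> * (\<Sum>n\<in>{s..<s + T}. X n \<omega> - eps)
        + (\<Sum>i<T. eps\<^sup>2 / 2 + real i * eps\<^sup>2 + (1 / 2 + real i * (1 - eps)) * a (s + i) \<omega>)"
    using assms(14,15) \<open>0 \<le> eps\<close> \<open>eps \<le> 1\<close> by (intro AE_I2 vqueue_square_drift_add) auto
  have "AE \<omega> in M. real_cond_exp M G (\<lambda>\<omega>. (vqueue eps X (s + T) \<omega>)\<^sup>2 / 2 - (vqueue eps X s \<omega>)\<^sup>2 / 2) \<omega>
      \<le> Bk2 lam eps T * real T
        + real_cond_exp M G (\<lambda>\<omega>. vqueue eps X s \<omega> * (\<Sum>n\<in>{s..<s + T}. X n \<omega> - eps)) \<omega>"
    unfolding Bk2_frame_sum[symmetric]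
    by (rule real_cond_exp_le_affine_bound[OF G finite_lessThan
          integrable_vqueue_frame_terms[OF X_M assms(14,3,4)] integrable_binary[OF a_M assms(10)]
          path cond_a])
  then show ?thesis
    by (simp add: s_def G_def add.commute)
qed

end
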